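(* Let $G$ be a finite graph and let $k$ be an integer with $k>\chi(G)$. Then $G$ is determined up to isomorphism by the recolouring graph $\mathcal{C}_k(G)$, even without knowing the value of $k$: if $G'$ is another finite graph and $k'>\chi(G')$ is an integer with $\mathcal{C}_k(G)\cong\mathcal{C}_{k'}(G')$, then $G\cong G'$.
   Context: All graphs are finite and simple. For a positive integer $k$, a (proper) $k$-colouring of $G$ is a map $c:V(G)\to\{1,\dots,k\}$ with $c(u)\neq c(v)$ for every edge $uv$; $\chi(G)$ is the least $k$ for which a $k$-colouring exists. The $k$-recolouring graph $\mathcal{C}_k(G)$ is the graph whose vertices are all $k$-colourings of $G$, two colourings being adjacent if and only if they differ at exactly one vertex of $G$. *)

theory Defs
  imports "HOL-Library.FuncSet"
begin

definition simple_graph :: "'a set \<Rightarrow> 'a set set \<Rightarrow> bool" where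
  "simple_graph V E \<longleftrightarrow> finite V \<and> (\<forall>e\<in>E. e \<subseteq> V \<and> card e = 2)"

definition is_colouring :: "'a set \<Rightarrow> 'a set set \<Rightarrow> nat \<Rightarrow> ('a \<Rightarrow> nat) \<Rightarrow> bool" where
  "is_colouring V E k c \<longleftrightarrow>
     c \<in> V \<rightarrow>\<^sub>E {1..k} \<and> (\<forall>u\<in>V. \<forall>v\<in>V. {u, v} \<in> E \<longrightarrow> c u \<noteq> c v)"

definition colourings :: "'a set \<Rightarrow> 'a set set \<Rightarrow> nat \<Rightarrow> ('a \<Rightarrow> nat) set" where
  "colourings V E k = {c. is_colouring V E k c}"

definition chromatic_number :: "'a set \<Rightarrow> 'a set set \<Rightarrow> nat" where
  "chromatic_number V E = (LEAST k. \<exists>c. is_colouring V E k c)"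

definition recolouring_edges :: "'a set \<Rightarrow> 'a set set \<Rightarrow> nat \<Rightarrow> ('a \<Rightarrow> nat) set set" where
  "recolouring_edges V E k =
     {{c, d} | c d. c \<in> colourings V E k \<and> d \<in> colourings V E k \<and>
                   card {v\<in>V. c v \<noteq> d v} = 1}"

definition graph_iso :: "'a set \<Rightarrow> 'a set set \<Rightarrow> 'b set \<Rightarrow> 'b set set \<Rightarrow> bool" where
  "graph_iso V E V' E' \<longleftrightarrow>
     (\<exists>f. bij_betw f V V' \<and> (\<forall>u\<in>V. \<forall>v\<in>V. {u, v} \<in> E \<longleftrightarrow> {f u, f v} \<in> E'))"

end

theory Submission
  imports Defs
begin

(* Fix a k-colouring c of G that leaves the colour k unused, which exists since k > chi(G).
   The colourings c(v := k), v \<in> V, are neighbours of c in C_k(G); they are pairwise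
   non-adjacent, and for an edge uv of G the only common neighbour of c(u := k) and c(v := k)
   is c itself. An isomorphism \<phi> : C_k(G) \<rightarrow> C_k'(G') sends c(v := k) to a colouring that
   differs from \<phi> c at a single vertex F v. In every recolouring graph, two recolourings of
   one colouring at the same vertex are adjacent, and recolourings at two distinct non-adjacent
   vertices have a second common neighbour; hence F is injective and maps edges to edges.
   Doing the same for the inverse of \<phi> gives injective homomorphisms in both directions, and
   between finite graphs these are isomorphisms. *)

section \<open>Colourings and their recolouring graphs\<close>

lemma colouring_extensional: "c \<in> colourings V E k \<Longrightarrow> c \<in> V \<rightarrow>\<^sub>E {1..k}"
  by (simp add: colourings_def is_colouring_def)

lemma colouring_proper:
  "c \<in> colourings V E k \<Longrightarrow> u \<in> V \<Longrightarrow> v \<in> V \<Longrightarrow> {u, v} \<in> E \<Longrightarrow> c u \<noteq> c v"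
  by (simp add: colourings_def is_colouring_def)

lemma colouring_edge_distinct:
  "c \<in> colourings V E k \<Longrightarrow> u \<in> V \<Longrightarrow> v \<in> V \<Longrightarrow> {u, v} \<in> E \<Longrightarrow> u \<noteq> v"
  using colouring_proper[of c V E k u v] by blast

lemma colouring_fun_upd_iff:
  assumes c: "c \<in> colourings V E k" and u: "u \<in> V"
  shows "c(u := a) \<in> colourings V E k \<longleftrightarrow> a \<in> {1..k} \<and> (\<forall>y\<in>V. {u, y} \<in> E \<longrightarrow> c y \<noteq> a)"
proof
  assume cu: "c(u := a) \<in> colourings V E k"
  have "(c(u := a)) u \<in> {1..k}"
    using colouring_extensional[OF cu] u by (rule PiE_mem)
  then have "a \<in> {1..k}" by simp
  moreover have "c y \<noteq> a" if "y \<in> V" "{u, y} \<in> E" for y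
    using colouring_proper[OF cu u that] colouring_edge_distinct[OF c u that] by simp
  ultimately show "a \<in> {1..k} \<and> (\<forall>y\<in>V. {u, y} \<in> E \<longrightarrow> c y \<noteq> a)" by blast
next
  assume a: "a \<in> {1..k} \<and> (\<forall>y\<in>V. {u, y} \<in> E \<longrightarrow> c y \<noteq> a)"
  have "c(u := a) \<in> insert u V \<rightarrow>\<^sub>E {1..k}"
    using a by (intro PiE_fun_upd colouring_extensional[OF c]) blast
  then have "c(u := a) \<in> V \<rightarrow>\<^sub>E {1..k}"
    using u by (simp add: insert_absorb)
  moreover have "(c(u := a)) x \<noteq> (c(u := a)) y" if xy: "x \<in> V" "y \<in> V" "{x, y} \<in> E" for x y
  proof -
    have "{y, x} \<in> E" using xy(3) by (simp add: insert_commute)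
    then show ?thesis
      using xy a colouring_proper[OF c xy] colouring_edge_distinct[OF c xy] by auto
  qed
  ultimately show "c(u := a) \<in> colourings V E k"
    by (simp add: colourings_def is_colouring_def)
qed

lemma colouring_fun_upd_unused:
  assumes c: "c \<in> colourings V E k" and unused: "k \<notin> c ` V" and v: "v \<in> V"
  shows "c(v := k) \<in> colourings V E k"
proof -
  have "c v \<in> {1..k}"
    using colouring_extensional[OF c] v by (rule PiE_mem)
  then show ?thesis
    using colouring_fun_upd_iff[OF c v] unused by auto
qed

lemma card_disagreement_eq_1_iff:
  assumes "c \<in> V \<rightarrow>\<^sub>E A" "d \<in> V \<rightarrow>\<^sub>E B"
  shows "card {v\<in>V. c v \<noteq> d v} = 1 \<longleftrightarrow> (\<exists>v\<in>V. c v \<noteq> d v \<and> d = c(v := d v))"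
proof -
  have "{w\<in>V. c w \<noteq> d w} = {v} \<longleftrightarrow> v \<in> V \<and> c v \<noteq> d v \<and> d = c(v := d v)" for v
  proof
    assume v: "{w\<in>V. c w \<noteq> d w} = {v}"
    have "d x = c x" if "x \<noteq> v" for x
      using v that assms by (cases "x \<in> V") (auto simp: PiE_def extensional_def)
    then show "v \<in> V \<and> c v \<noteq> d v \<and> d = c(v := d v)"
      using v by (auto simp: fun_eq_iff)
  next
    assume "v \<in> V \<and> c v \<noteq> d v \<and> d = c(v := d v)"
    then have v: "v \<in> V" "c v \<noteq> d v" and "d = c(v := d v)" by auto
    then have only_v: "x = v" if "c x \<noteq> d x" for x
      using that by (metis fun_upd_other)
    show "{w\<in>V. c w \<noteq> d w} = {v}"
    proof (intro equalityI subsetI)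
      fix x assume "x \<in> {w\<in>V. c w \<noteq> d w}"
      then show "x \<in> {v}" using only_v by simp
    qed (use v in simp)
  qed
  then show ?thesis
    by (simp add: card_1_singleton_iff Bex_def)
qed

lemma recolouring_edge_iff:
  "{c, d} \<in> recolouring_edges V E k \<longleftrightarrow>
     c \<in> colourings V E k \<and> d \<in> colourings V E k \<and> (\<exists>v\<in>V. c v \<noteq> d v \<and> d = c(v := d v))"
proof -
  have "{c, d} \<in> recolouring_edges V E k \<longleftrightarrow>
     c \<in> colourings V E k \<and> d \<in> colourings V E k \<and> card {v\<in>V. c v \<noteq> d v} = 1"
  proof
    assume "{c, d} \<in> recolouring_edges V E k"
    then obtain c' d' where cd: "{c, d} = {c', d'}" and "c' \<in> colourings V E k"
      "d' \<in> colourings V E k" "card {v\<in>V. c' v \<noteq> d' v} = 1"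
      unfolding recolouring_edges_def by blast
    moreover have "{v\<in>V. d' v \<noteq> c' v} = {v\<in>V. c' v \<noteq> d' v}" by auto
    ultimately show "c \<in> colourings V E k \<and> d \<in> colourings V E k \<and> card {v\<in>V. c v \<noteq> d v} = 1"
      using cd by (auto simp: doubleton_eq_iff)
  qed (auto simp: recolouring_edges_def)
  also have "\<dots> \<longleftrightarrow>
     c \<in> colourings V E k \<and> d \<in> colourings V E k \<and> (\<exists>v\<in>V. c v \<noteq> d v \<and> d = c(v := d v))"
    using card_disagreement_eq_1_iff[OF colouring_extensional colouring_extensional] by blast
  finally show ?thesis .
qed

lemma recolouring_edgeE:
  assumes "{c, d} \<in> recolouring_edges V E k"
  obtains v where "c \<in> colourings V E k" "d \<in> colourings V E k" "v \<in> V" "c v \<noteq> d v"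
    "d = c(v := d v)"
  using assms unfolding recolouring_edge_iff by blast

lemma recolouring_edge_fun_upd:
  assumes "c \<in> colourings V E k" "c(u := a) \<in> colourings V E k" "u \<in> V" "c u \<noteq> a"
  shows "{c, c(u := a)} \<in> recolouring_edges V E k"
  unfolding recolouring_edge_iff using assms by auto

lemma recolouring_edge_same_vertex:
  assumes "c(u := a) \<in> colourings V E k" "c(u := b) \<in> colourings V E k" "u \<in> V" "a \<noteq> b"
  shows "{c(u := a), c(u := b)} \<in> recolouring_edges V E k"
  using recolouring_edge_fun_upd[of "c(u := a)" V E k u b] assms by simp

lemma not_recolouring_edge_distinct_vertices:
  assumes "u \<noteq> v" "c u \<noteq> a" "c v \<noteq> b"
  shows "{c(u := a), c(v := b)} \<notin> recolouring_edges V E k"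
proof
  assume "{c(u := a), c(v := b)} \<in> recolouring_edges V E k"
  then obtain w where "c(v := b) = c(u := a, w := (c(v := b)) w)"
    unfolding recolouring_edge_iff by blast
  then have "(c(v := b)) x = (c(u := a, w := (c(v := b)) w)) x" for x
    by simp
  from this[of u] this[of v] show False
    using assms by (auto split: if_splits)
qed

lemma recolouring_common_neighbour:
  assumes c: "c \<in> colourings V E k" and cu: "c(u := a) \<in> colourings V E k"
    and cv: "c(v := b) \<in> colourings V E k"
    and u: "u \<in> V" and v: "v \<in> V" and uv: "u \<noteq> v" and non_edge: "{u, v} \<notin> E"
    and recoloured: "c u \<noteq> a" "c v \<noteq> b"
  shows "\<exists>f. f \<noteq> c \<and> {c(u := a), f} \<in> recolouring_edges V E k
             \<and> {c(v := b), f} \<in> recolouring_edges V E k"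
proof (intro exI[of _ "c(u := a, v := b)"] conjI)
  have "a \<in> {1..k}" "\<forall>y\<in>V. {u, y} \<in> E \<longrightarrow> c y \<noteq> a"
    using cu colouring_fun_upd_iff[OF c u] by blast+
  then have "(c(v := b))(u := a) \<in> colourings V E k"
    using colouring_fun_upd_iff[OF cv u] uv non_edge by auto
  then have cuv: "c(u := a, v := b) \<in> colourings V E k"
    using uv by (simp add: fun_upd_twist)
  show "c(u := a, v := b) \<noteq> c"
    using uv recoloured(1) by (metis fun_upd_other fun_upd_same)
  show "{c(u := a), c(u := a, v := b)} \<in> recolouring_edges V E k"
    using recolouring_edge_fun_upd[OF cu cuv v] uv recoloured(2) by simp
  show "{c(v := b), c(u := a, v := b)} \<in> recolouring_edges V E k"
    using recolouring_edge_fun_upd[of "c(v := b)" V E k u a] cv cuv u uv recoloured(1)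
    by (simp add: fun_upd_twist)
qed

lemma recolouring_common_neighbour_unique:
  assumes c: "c \<in> colourings V E k" and unused: "a \<notin> c ` V"
    and u: "u \<in> V" and v: "v \<in> V" and uv: "{u, v} \<in> E"
    and fu: "{c(u := a), f} \<in> recolouring_edges V E k"
    and fv: "{c(v := a), f} \<in> recolouring_edges V E k"
  shows "f = c"
proof -
  obtain x where f: "f \<in> colourings V E k" and fx: "f = c(u := a, x := f x)"
    using fu unfolding recolouring_edge_iff by blast
  obtain y where fy: "f = c(v := a, y := f y)"
    using fv unfolding recolouring_edge_iff by blast
  have off_x: "f w = (c(u := a)) w" if "w \<noteq> x" for w
    using fx that by (metis fun_upd_other)
  have off_y: "f w = (c(v := a)) w" if "w \<noteq> y" for w
    using fy that by (metis fun_upd_other)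
  have "u \<noteq> v" "f u \<noteq> f v" "c u \<noteq> a" "c v \<noteq> a"
    using colouring_edge_distinct[OF c u v uv] colouring_proper[OF f u v uv] unused u v by auto
  \<comment> \<open>f cannot give the colour a to both ends of the edge uv\<close>
  then have "x = u" "y = v"
    using off_x[of u] off_x[of v] off_y[of u] off_y[of v] by (cases "x = u"; cases "y = v"; simp)+
  then have "f w = c w" for w
    using off_x[of w] off_y[of w] \<open>u \<noteq> v\<close> by (cases "w = u") auto
  then show ?thesis ..
qed

section \<open>Finite simple graphs\<close>

lemma simple_graph_finite_edges: "simple_graph V E \<Longrightarrow> finite E"
  unfolding simple_graph_def by (meson PowI finite_Pow_iff finite_subset subsetI)

lemma simple_graph_edge_distinct: "simple_graph V E \<Longrightarrow> {u, v} \<in> E \<Longrightarrow> u \<noteq> v"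
  unfolding simple_graph_def by fastforce

lemma simple_graph_colourable:
  assumes G: "simple_graph V E"
  shows "\<exists>k c. is_colouring V E k c"
proof -
  have "finite V"
    using G unfolding simple_graph_def by blast
  then obtain h where h: "bij_betw h V {0..<card V}"
    using ex_bij_betw_finite_nat by blast
  define c where "c = (\<lambda>x\<in>V. Suc (h x))"
  have "c \<in> V \<rightarrow>\<^sub>E {1..card V}"
    using bij_betwE[OF h] by (auto simp: c_def)
  moreover have "c u \<noteq> c v" if "u \<in> V" "v \<in> V" "{u, v} \<in> E" for u v
    using that simple_graph_edge_distinct[OF G] bij_betw_imp_inj_on[OF h]
    by (auto simp: c_def inj_on_def)
  ultimately show ?thesis
    unfolding is_colouring_def by blast
qed

lemma colouring_with_unused_colour:
  assumes G: "simple_graph V E" and k: "chromatic_number V E < k"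
  shows "\<exists>c\<in>colourings V E k. k \<notin> c ` V"
proof -
  obtain c where c: "is_colouring V E (chromatic_number V E) c"
    using LeastI_ex[OF simple_graph_colourable[OF G]] unfolding chromatic_number_def by blast
  then have "c \<in> V \<rightarrow>\<^sub>E {1..chromatic_number V E}"
    unfolding is_colouring_def by blast
  then have "c \<in> V \<rightarrow>\<^sub>E {1..k}" "k \<notin> c ` V"
    using k by (auto simp: PiE_iff)
  with c show ?thesis
    unfolding colourings_def is_colouring_def by blast
qed

definition graph_monomorphism ::
    "'a set \<Rightarrow> 'a set set \<Rightarrow> 'b set \<Rightarrow> 'b set set \<Rightarrow> ('a \<Rightarrow> 'b) \<Rightarrow> bool"
  where "graph_monomorphism V E V' E' F \<longleftrightarrow>
    inj_on F V \<and> F ` V \<subseteq> V' \<and> (\<forall>u\<in>V. \<forall>v\<in>V. {u, v} \<in> E \<longrightarrow> {F u, F v} \<in> E')"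

lemma graph_monomorphism_edge_image:
  assumes G: "simple_graph V E" and F: "graph_monomorphism V E V' E' F"
  shows "inj_on ((`) F) E" and "(`) F ` E \<subseteq> E'"
proof -
  have EV: "e \<subseteq> V" if "e \<in> E" for e
    using G that unfolding simple_graph_def by blast
  have inj: "inj_on F V"
    using F unfolding graph_monomorphism_def by blast
  show "inj_on ((`) F) E"
  proof (rule inj_onI)
    fix e1 e2 assume "e1 \<in> E" "e2 \<in> E" "F ` e1 = F ` e2"
    then show "e1 = e2"
      using inj_on_image_eq_iff[OF inj EV EV] by blast
  qed
  show "(`) F ` E \<subseteq> E'"
  proof
    fix e' assume "e' \<in> (`) F ` E"
    then obtain e where e: "e \<in> E" and e': "e' = F ` e" by blast
    have "card e = 2"
      using G e unfolding simple_graph_def by blast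
    then obtain a b where ab: "e = {a, b}"
      unfolding card_2_iff by blast
    moreover have "a \<in> V" "b \<in> V"
      using EV[OF e] ab by auto
    ultimately show "e' \<in> E'"
      using F e e' unfolding graph_monomorphism_def by simp
  qed
qed

lemma graph_monomorphism_reflects_edges:
  assumes G: "simple_graph V E" and F: "graph_monomorphism V E V' E' F"
    and image: "(`) F ` E = E'"
    and u: "u \<in> V" and v: "v \<in> V" and uv: "{F u, F v} \<in> E'"
  shows "{u, v} \<in> E"
proof -
  obtain e where e: "e \<in> E" and "F ` e = F ` {u, v}"
    using uv image by (metis image_empty image_insert imageE)
  moreover have "e \<subseteq> V"
    using G e unfolding simple_graph_def by blast
  moreover have "inj_on F V"
    using F unfolding graph_monomorphism_def by blast
  ultimately have "e = {u, v}"
    using inj_on_image_eq_iff[of F V e "{u, v}"] u v by blast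
  with e show ?thesis by simp
qed

lemma graph_iso_if_monomorphisms:
  assumes G: "simple_graph V E" and G': "simple_graph V' E'"
    and F: "graph_monomorphism V E V' E' F" and F': "graph_monomorphism V' E' V E F'"
  shows "graph_iso V E V' E'"
proof -
  have fin: "finite V" "finite V'"
    using G G' unfolding simple_graph_def by blast+
  have inj: "inj_on F V" and FV: "F ` V \<subseteq> V'"
    using F unfolding graph_monomorphism_def by blast+
  have "card V' \<le> card V"
    using F' fin(1) unfolding graph_monomorphism_def by (blast intro: card_inj_on_le)
  then have "F ` V = V'"
    using card_subset_eq[OF fin(2) FV] card_image[OF inj] card_inj_on_le[OF inj FV fin(2)] by simp
  then have bij: "bij_betw F V V'"
    using inj unfolding bij_betw_def by blast
  note edges = graph_monomorphism_edge_image[OF G F]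
  note edges' = graph_monomorphism_edge_image[OF G' F']
  have "card E' \<le> card E"
    using card_inj_on_le[OF edges'(1,2) simple_graph_finite_edges[OF G]] .
  then have image: "(`) F ` E = E'"
    using card_subset_eq[OF simple_graph_finite_edges[OF G'] edges(2)] card_image[OF edges(1)]
      card_inj_on_le[OF edges(1,2) simple_graph_finite_edges[OF G']] by simp
  have "{u, v} \<in> E \<longleftrightarrow> {F u, F v} \<in> E'" if "u \<in> V" "v \<in> V" for u v
    using that F graph_monomorphism_reflects_edges[OF G F image] unfolding graph_monomorphism_def
    by blast
  with bij show ?thesis
    unfolding graph_iso_def by blast
qed

lemma graph_iso_sym:
  assumes "graph_iso V E V' E'"
  shows "graph_iso V' E' V E"
proof -
  obtain f where f: "bij_betw f V V'"
    and edges: "\<forall>u\<in>V. \<forall>v\<in>V. {u, v} \<in> E \<longleftrightarrow> {f u, f v} \<in> E'"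
    using assms unfolding graph_iso_def by blast
  let ?g = "inv_into V f"
  have g: "bij_betw ?g V' V"
    using bij_betw_inv_into[OF f] .
  have "{u, v} \<in> E' \<longleftrightarrow> {?g u, ?g v} \<in> E" if "u \<in> V'" "v \<in> V'" for u v
    using edges bij_betw_apply[OF g that(1)] bij_betw_apply[OF g that(2)]
      bij_betw_inv_into_right[OF f that(1)] bij_betw_inv_into_right[OF f that(2)] by metis
  with g show ?thesis
    unfolding graph_iso_def by blast
qed

section \<open>Isomorphisms of recolouring graphs\<close>

context
  fixes V :: "'a set" and E :: "'a set set" and k :: nat
    and V' :: "'b set" and E' :: "'b set set" and k' :: nat
    and \<phi> :: "('a \<Rightarrow> nat) \<Rightarrow> 'b \<Rightarrow> nat" and c :: "'a \<Rightarrow> nat"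
    and F :: "'a \<Rightarrow> 'b" and a :: "'a \<Rightarrow> nat"
  assumes \<phi>: "bij_betw \<phi> (colourings V E k) (colourings V' E' k')"
    and edge: "\<And>d e. d \<in> colourings V E k \<Longrightarrow> e \<in> colourings V E k \<Longrightarrow>
      {d, e} \<in> recolouring_edges V E k \<longleftrightarrow> {\<phi> d, \<phi> e} \<in> recolouring_edges V' E' k'"
    and c: "c \<in> colourings V E k" and unused: "k \<notin> c ` V"
    and F: "\<And>v. v \<in> V \<Longrightarrow> F v \<in> V'"
    and recoloured: "\<And>v. v \<in> V \<Longrightarrow> \<phi> c (F v) \<noteq> a v"
    and \<phi>_c_upd: "\<And>v. v \<in> V \<Longrightarrow> \<phi> (c(v := k)) = (\<phi> c)(F v := a v)"
begin

private lemma c_neq_k: "v \<in> V \<Longrightarrow> c v \<noteq> k"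
  using unused by blast

private lemma c_upd_colouring: "v \<in> V \<Longrightarrow> c(v := k) \<in> colourings V E k"
  using colouring_fun_upd_unused[OF c unused] .

private lemma \<phi>c_colouring: "\<phi> c \<in> colourings V' E' k'"
  using bij_betw_apply[OF \<phi> c] .

private lemma \<phi>c_upd_colouring: "v \<in> V \<Longrightarrow> (\<phi> c)(F v := a v) \<in> colourings V' E' k'"
  using bij_betw_apply[OF \<phi> c_upd_colouring] \<phi>_c_upd by simp

lemma recolouring_iso_vertex_map_inj: "inj_on F V"
proof (rule inj_onI, rule ccontr)
  fix u v assume u: "u \<in> V" and v: "v \<in> V" and same: "F u = F v" and "u \<noteq> v"
  then have "c(u := k) \<noteq> c(v := k)"
    using c_neq_k[OF u] by (metis fun_upd_same fun_upd_other)
  then have "\<phi> (c(u := k)) \<noteq> \<phi> (c(v := k))"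
    using bij_betw_imp_inj_on[OF \<phi>] c_upd_colouring u v by (metis inj_on_def)
  then have "{\<phi> (c(u := k)), \<phi> (c(v := k))} \<in> recolouring_edges V' E' k'"
    using recolouring_edge_same_vertex[OF \<phi>c_upd_colouring[OF u]
        \<phi>c_upd_colouring[OF v, folded same]] F[OF u] \<phi>_c_upd[OF u] \<phi>_c_upd[OF v] same by fastforce
  then show False
    using edge[OF c_upd_colouring[OF u] c_upd_colouring[OF v]]
      not_recolouring_edge_distinct_vertices[OF \<open>u \<noteq> v\<close> c_neq_k[OF u] c_neq_k[OF v]]
    by blast
qed

lemma recolouring_iso_vertex_map_edge:
  assumes u: "u \<in> V" and v: "v \<in> V" and uv: "{u, v} \<in> E"
  shows "{F u, F v} \<in> E'"
proof (rule ccontr)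
  assume "{F u, F v} \<notin> E'"
  moreover have "F u \<noteq> F v"
    using recolouring_iso_vertex_map_inj u v colouring_edge_distinct[OF c u v uv]
    by (meson inj_on_def)
  ultimately obtain f' where "f' \<noteq> \<phi> c"
    and f'u: "{\<phi> (c(u := k)), f'} \<in> recolouring_edges V' E' k'"
    and f'v: "{\<phi> (c(v := k)), f'} \<in> recolouring_edges V' E' k'"
    using recolouring_common_neighbour[OF \<phi>c_colouring \<phi>c_upd_colouring[OF u]
        \<phi>c_upd_colouring[OF v] F[OF u] F[OF v] _ _ recoloured[OF u] recoloured[OF v]]
      \<phi>_c_upd[OF u] \<phi>_c_upd[OF v]
    by auto
  obtain f where f: "f \<in> colourings V E k" and f': "f' = \<phi> f"
    using f'u bij_betw_imp_surj_on[OF \<phi>] by (auto elim: recolouring_edgeE)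
  have "{c(u := k), f} \<in> recolouring_edges V E k" "{c(v := k), f} \<in> recolouring_edges V E k"
    using edge[OF c_upd_colouring[OF u] f] edge[OF c_upd_colouring[OF v] f] f'u f'v f'
    by simp_all
  then have "f = c"
    using recolouring_common_neighbour_unique[OF c unused u v uv] by blast
  with \<open>f' \<noteq> \<phi> c\<close> f' show False by simp
qed

end

lemma recolouring_iso_imp_graph_monomorphism:
  assumes G: "simple_graph V E" and k: "chromatic_number V E < k"
    and iso: "graph_iso (colourings V E k) (recolouring_edges V E k)
                        (colourings V' E' k') (recolouring_edges V' E' k')"
  shows "\<exists>F. graph_monomorphism V E V' E' F"
proof -
  obtain c where c: "c \<in> colourings V E k" and unused: "k \<notin> c ` V"
    using colouring_with_unused_colour[OF G k] by blast
  obtain \<phi> where \<phi>: "bij_betw \<phi> (colourings V E k) (colourings V' E' k')"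
    and edge: "\<And>d e. d \<in> colourings V E k \<Longrightarrow> e \<in> colourings V E k \<Longrightarrow>
      {d, e} \<in> recolouring_edges V E k \<longleftrightarrow> {\<phi> d, \<phi> e} \<in> recolouring_edges V' E' k'"
    using iso unfolding graph_iso_def by blast
  have "\<exists>x b. x \<in> V' \<and> \<phi> c x \<noteq> b \<and> \<phi> (c(v := k)) = (\<phi> c)(x := b)" if v: "v \<in> V" for v
  proof -
    have cv: "c(v := k) \<in> colourings V E k"
      using colouring_fun_upd_unused[OF c unused v] .
    moreover have "c v \<noteq> k"
      using unused v by blast
    ultimately have "{\<phi> c, \<phi> (c(v := k))} \<in> recolouring_edges V' E' k'"
      using edge[OF c cv] recolouring_edge_fun_upd[OF c cv v] by simp
    then obtain x where "x \<in> V'" "\<phi> c x \<noteq> \<phi> (c(v := k)) x"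
      "\<phi> (c(v := k)) = (\<phi> c)(x := \<phi> (c(v := k)) x)"
      by (rule recolouring_edgeE)
    then show ?thesis by (intro exI conjI)
  qed
  then obtain F a where "\<And>v. v \<in> V \<Longrightarrow> F v \<in> V'" "\<And>v. v \<in> V \<Longrightarrow> \<phi> c (F v) \<noteq> a v"
    "\<And>v. v \<in> V \<Longrightarrow> \<phi> (c(v := k)) = (\<phi> c)(F v := a v)"
    by metis
  with recolouring_iso_vertex_map_inj[OF \<phi> edge c unused]
    recolouring_iso_vertex_map_edge[OF \<phi> edge c unused]
  show ?thesis
    unfolding graph_monomorphism_def by blast
qed

theorem theorem1p2:
  fixes V :: "'a set" and E :: "'a set set"
    and V' :: "'b set" and E' :: "'b set set"
    and k k' :: nat
  assumes "simple_graph V E" and "simple_graph V' E'"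
    and "k > chromatic_number V E" and "k' > chromatic_number V' E'"
    and "graph_iso (colourings V E k) (recolouring_edges V E k)
                   (colourings V' E' k') (recolouring_edges V' E' k')"
  shows "graph_iso V E V' E'"
proof -
  obtain F where "graph_monomorphism V E V' E' F"
    using recolouring_iso_imp_graph_monomorphism[OF assms(1,3,5)] by blast
  moreover obtain F' where "graph_monomorphism V' E' V E F'"
    using recolouring_iso_imp_graph_monomorphism[OF assms(2,4) graph_iso_sym[OF assms(5)]] by blast
  ultimately show ?thesis
    using graph_iso_if_monomorphisms[OF assms(1,2)] by blast
qed

end
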